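(* Let $(c_n)_{n\in\mathbb{N}}$ be a sequence of positive numbers such that either $c_n=n$ for all $n$, or $\lim_{n\to\infty}c_n/n=\infty$. For $\gamma>0$ define $$Y^{(\le\gamma)}_{[nt]}:=\sum_{k=0}^{[nt]}\mathbf{1}_{\{J_k\le e^{\gamma c_n}\}}\sum_{i=1}^{J_k}X_{i,k}([nt]-k),\qquad t\ge0,$$ and let $m(r):=\mu^{-r}\wedge1$ for $r\in\mathbb{N}_0$ if $c_n=n$, and $m(r):=1$ for $r\in\mathbb{N}_0$ if $c_n/n\to\infty$. Fix $T>0$ and $\gamma>0$. Then for every $\delta>0$, $$\sum_{n\ge1}\mathbb{P}\Big\{\sup_{0\le t\le T}\frac1{c_n}\log^+\Big(m([nt])\,Y^{(\le\gamma)}_{[nt]}\Big)>\gamma+\delta\Big\}<\infty.$$ (No assumption on the tail of $J$ is needed.)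
   Context: $\mathbb{N}_0=\mathbb{N}\cup\{0\}$. The families $(X_{i,k})_{i\in\mathbb{N},k\in\mathbb{N}_0}$ and $(J_k)_{k\in\mathbb{N}_0}$ are mutually independent, each consisting of i.i.d. random objects; each $X_{i,k}=(X_{i,k}(n))_{n\in\mathbb{N}_0}$ is a Galton–Watson process with $X_{i,k}(0)=1$ and offspring mean $\mu\in(0,\infty)$; each $J_k$ is a nonnegative integer-valued random variable. $\log^+x=\max(\log x,0)$, $[\cdot]$ is the integer part, $a\wedge b=\min(a,b)$. *)

theory Defs
  imports "HOL-Probability.Probability"
begin

text \<open>Galton--Watson process driven by an offspring array:
  xi n j = number of children of the j-th individual of generation n.
  GW xi 0 = 1, GW xi (n+1) = sum of xi n j over j < GW xi n.\<close>
fun GW :: "(nat \<Rightarrow> nat \<Rightarrow> 'a \<Rightarrow> nat) \<Rightarrow> nat \<Rightarrow> 'a \<Rightarrow> nat" where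
  "GW xi 0 \<omega> = 1"
| "GW xi (Suc n) \<omega> = (\<Sum>j<GW xi n \<omega>. xi n j \<omega>)"

definition logp :: "real \<Rightarrow> real" where
  "logp x = (if x \<le> 1 then 0 else ln x)"

text \<open>Truncated sum Y^{(<= gamma)}_N at scale n (N plays the role of [nt]).
  X i k = GW xi_{i,k}, offspring array xi i k n j.\<close>
definition Ytrunc ::
  "(nat \<Rightarrow> nat \<Rightarrow> nat \<Rightarrow> nat \<Rightarrow> 'a \<Rightarrow> nat) \<Rightarrow> (nat \<Rightarrow> 'a \<Rightarrow> nat) \<Rightarrow> real \<Rightarrow> real \<Rightarrow> nat \<Rightarrow> 'a \<Rightarrow> real" where
  "Ytrunc xi J \<gamma> cn N \<omega> =
     (\<Sum>k\<in>{0..N}. if real (J k \<omega>) \<le> exp (\<gamma> * cn)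
                   then real (\<Sum>i\<in>{1..J k \<omega>}. GW (xi i k) (N - k) \<omega>) else 0)"

definition mfun :: "real \<Rightarrow> (nat \<Rightarrow> real) \<Rightarrow> nat \<Rightarrow> real" where
  "mfun \<mu> c r = (if (\<forall>n\<ge>1. c n = real n) then min (inverse \<mu> ^ r) 1 else 1)"

end

theory Submission
  imports Defs "HOL-Real_Asymp.Real_Asymp"
begin

text \<open>
  The n-th generation of a Galton--Watson process is built from offspring variables of earlier
  generations only, so it is independent of the offspring of generation n; hence its mean is
  \<open>\<mu>^n\<close>. On the event \<open>J\<^sub>k \<le> e^{\<gamma> c_n}\<close> at most \<open>e^{\<gamma> c_n}\<close> processes are summed,
  so \<open>E[m(N) Y\<^sub>N] \<le> (N+1) e^{\<gamma> c_n} \<rho>^N\<close>, where \<open>\<rho> = 1\<close> if \<open>c_n = n\<close> (the weight \<open>m\<close>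
  cancels the growth) and \<open>\<rho> = max 1 \<mu>\<close> otherwise. Markov's inequality at level
  \<open>e^{(\<gamma>+\<delta>) c_n}\<close> and a union bound over the at most \<open>nT + 1\<close> values of \<open>[nt]\<close> give
  \<open>P(A_n) \<le> (nT+1)^2 \<rho>^{nT} e^{-\<delta> c_n}\<close>, which is summable in both regimes: for \<open>c_n = n\<close>
  because \<open>\<rho> = 1\<close>, and for \<open>c_n/n \<rightarrow> \<infinity>\<close> because \<open>e^{-\<delta> c_n}\<close> beats every exponential in \<open>n\<close>.
  No tail assumption on \<open>J\<close> is needed because the truncation caps the number of summands.
\<close>

lemma (in prob_space) indep_vars_reindex:
  assumes indep: "indep_vars M' X I" and f: "inj_on f J" "f ` J \<subseteq> I"
  shows "indep_vars (\<lambda>j. M' (f j)) (\<lambda>j. X (f j)) J"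
proof -
  let ?F = "\<lambda>i. {X i -` A \<inter> space M | A. A \<in> sets (M' i)}"
  have rv: "\<forall>i\<in>I. random_variable (M' i) (X i)" and ind: "indep_sets ?F I"
    using indep unfolding indep_vars_def2 by auto
  have "indep_sets (\<lambda>j. ?F (f j)) J"
  proof (rule indep_setsI)
    fix j assume "j \<in> J"
    then show "?F (f j) \<subseteq> events"
      using rv f by (auto intro: measurable_sets)
  next
    fix A K assume K: "K \<noteq> {}" "K \<subseteq> J" "finite K" and A: "\<forall>j\<in>K. A j \<in> ?F (f j)"
    define A' where "A' = A \<circ> the_inv_into K f"
    have inj: "inj_on f K"
      using f(1) K(2) by (rule inj_on_subset)
    have A'_f: "A' (f j) = A j" if "j \<in> K" for j
      using inj that by (simp add: A'_def the_inv_into_f_f)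
    have "\<forall>i\<in>f ` K. A' i \<in> ?F i"
      using A by (simp add: A'_f)
    then have "prob (\<Inter>i\<in>f ` K. A' i) = (\<Prod>i\<in>f ` K. prob (A' i))"
      using K f(2) by (intro indep_setsD[OF ind]) blast+
    then show "prob (\<Inter>j\<in>K. A j) = (\<Prod>j\<in>K. prob (A j))"
      using inj by (simp add: prod.reindex A'_f)
  qed
  then show ?thesis
    using rv f unfolding indep_vars_def2 by auto
qed

lemma (in prob_space) indep_var_nn_integral:
  fixes f g :: "_ \<Rightarrow> ennreal"
  assumes "indep_var N1 X1 N2 X2" "f \<in> borel_measurable N1" "g \<in> borel_measurable N2"
  shows "(\<integral>\<^sup>+\<omega>. f (X1 \<omega>) * g (X2 \<omega>) \<partial>M) = (\<integral>\<^sup>+\<omega>. f (X1 \<omega>) \<partial>M) * (\<integral>\<^sup>+\<omega>. g (X2 \<omega>) \<partial>M)"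
proof -
  have "indep_var borel (f \<circ> X1) borel (g \<circ> X2)"
    using assms by (rule indep_var_compose)
  moreover have borel: "(\<lambda>_::bool. borel) = case_bool borel borel"
    by (rule ext) (simp split: bool.split)
  ultimately have "indep_vars (\<lambda>_. borel) (case_bool (f \<circ> X1) (g \<circ> X2)) UNIV"
    unfolding indep_var_def borel by simp
  then have "(\<integral>\<^sup>+\<omega>. (\<Prod>b\<in>UNIV. case_bool (f \<circ> X1) (g \<circ> X2) b \<omega>) \<partial>M)
      = (\<Prod>b\<in>UNIV. \<integral>\<^sup>+\<omega>. case_bool (f \<circ> X1) (g \<circ> X2) b \<omega> \<partial>M)"
    by (rule indep_vars_nn_integral[rotated]) simp_all
  then show ?thesis
    by (simp add: UNIV_bool comp_def mult.commute)
qed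

lemma nn_integral_comp_eq_if_distr_eq:
  assumes "distr M N X = distr M N Y" "X \<in> measurable M N" "Y \<in> measurable M N"
    and "f \<in> borel_measurable N"
  shows "(\<integral>\<^sup>+\<omega>. f (X \<omega>) \<partial>M) = (\<integral>\<^sup>+\<omega>. f (Y \<omega>) \<partial>M)"
proof -
  have "(\<integral>\<^sup>+\<omega>. f (X \<omega>) \<partial>M) = (\<integral>\<^sup>+x. f x \<partial>distr M N X)"
    using assms(2,4) by (simp add: nn_integral_distr)
  also have "\<dots> = (\<integral>\<^sup>+x. f x \<partial>distr M N Y)"
    by (simp only: assms(1))
  also have "\<dots> = (\<integral>\<^sup>+\<omega>. f (Y \<omega>) \<partial>M)"
    using assms(3,4) by (simp add: nn_integral_distr)
  finally show ?thesis .
qed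

lemma GW_cong:
  "(\<And>m j. m < n \<Longrightarrow> xi m j \<omega> = xi' m j \<omega>') \<Longrightarrow> GW xi n \<omega> = GW xi' n \<omega>'"
  by (induction n) auto

lemma measurable_GW:
  assumes "\<And>n j. xi n j \<in> measurable M (count_space UNIV)"
  shows "GW xi n \<in> measurable M (count_space UNIV)"
proof (induction n)
  case (Suc n)
  have "(\<lambda>\<omega>. (\<lambda>g \<omega>. \<Sum>j<g. xi n j \<omega>) (GW xi n \<omega>) \<omega>) \<in> measurable M (count_space UNIV)"
  proof (rule measurable_compose_countable[OF _ Suc])
    fix g :: nat
    show "(\<lambda>\<omega>. \<Sum>j<g. xi n j \<omega>) \<in> measurable M (count_space UNIV)"
      using assms by measurable
  qed
  then show ?case by simp
qed simp

lemma (in prob_space) indep_var_GW_offspring: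
  fixes xi :: "nat \<Rightarrow> nat \<Rightarrow> 'a \<Rightarrow> nat"
  assumes indep: "indep_vars (\<lambda>_. count_space UNIV) (\<lambda>(n, j). xi n j) UNIV"
  shows "indep_var (count_space UNIV) (GW xi n) (count_space UNIV) (xi n j)"
proof -
  define P :: "(nat \<times> nat) set" where "P = {(m, j') | m j'. m < n}"
  define R where "R B \<omega> = restrict (\<lambda>p. (case p of (n, j) \<Rightarrow> xi n j) \<omega>) B" for B \<omega>
  \<comment> \<open>\<open>G\<close> reads the process off the offspring array restricted to \<open>P\<close>.\<close>
  define G where "G x = GW (\<lambda>m j' x. if m < n then x (m, j') else 0) n x" for x :: "nat \<times> nat \<Rightarrow> nat"
  have "indep_var (PiM P (\<lambda>_. count_space UNIV)) (R P) (PiM {(n, j)} (\<lambda>_. count_space UNIV)) (R {(n, j)})"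
    unfolding R_def by (rule indep_var_restrict[OF indep]) (auto simp: P_def)
  moreover have "G \<in> measurable (PiM P (\<lambda>_. count_space UNIV)) (count_space UNIV)"
    unfolding G_def
  proof (rule measurable_GW)
    fix m j'
    show "(\<lambda>x. if m < n then x (m, j') else 0) \<in> measurable (PiM P (\<lambda>_. count_space UNIV)) (count_space UNIV)"
      by (cases "m < n") (auto simp: P_def intro: measurable_component_singleton)
  qed
  ultimately have "indep_var (count_space UNIV) (G \<circ> R P) (count_space UNIV) ((\<lambda>x. x (n, j)) \<circ> R {(n, j)})"
    by (rule indep_var_compose) (auto intro: measurable_component_singleton)
  moreover have "G \<circ> R P = GW xi n"
  proof
    fix \<omega>
    show "(G \<circ> R P) \<omega> = GW xi n \<omega>"
      unfolding G_def R_def P_def comp_def by (rule GW_cong) auto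
  qed
  moreover have "(\<lambda>x. x (n, j)) \<circ> R {(n, j)} = xi n j"
    by (auto simp: R_def)
  ultimately show ?thesis by simp
qed

lemma of_nat_sum_lessThan_eq_suminf:
  "(of_nat (\<Sum>j<g. a j) :: ennreal) = (\<Sum>j. (if j < g then 1 else 0) * of_nat (a j))"
proof -
  have "(\<Sum>j. (if j < g then 1 else 0) * (of_nat (a j) :: ennreal))
      = (\<Sum>j<g. (if j < g then 1 else 0) * of_nat (a j))"
    by (rule suminf_finite) auto
  then show ?thesis by simp
qed

lemma (in prob_space) nn_integral_GW:
  fixes xi :: "nat \<Rightarrow> nat \<Rightarrow> 'a \<Rightarrow> nat"
  assumes indep: "indep_vars (\<lambda>_. count_space UNIV) (\<lambda>(n, j). xi n j) UNIV"
    and mean: "\<And>n j. (\<integral>\<^sup>+\<omega>. of_nat (xi n j \<omega>) \<partial>M) = m"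
  shows "(\<integral>\<^sup>+\<omega>. of_nat (GW xi n \<omega>) \<partial>M) = m ^ n"
proof (induction n)
  case 0
  show ?case by (simp add: emeasure_space_1)
next
  case (Suc n)
  have [measurable]: "xi n' j \<in> measurable M (count_space UNIV)" for n' j
    using indep unfolding indep_vars_def by auto
  have [measurable]: "GW xi n \<in> measurable M (count_space UNIV)"
    by (rule measurable_GW) simp
  define I where "I j \<omega> = (if j < GW xi n \<omega> then 1 else 0 :: ennreal)" for j \<omega>
  have [measurable]: "I j \<in> borel_measurable M" for j
    unfolding I_def by measurable
  have "(\<integral>\<^sup>+\<omega>. of_nat (GW xi (Suc n) \<omega>) \<partial>M) = (\<integral>\<^sup>+\<omega>. (\<Sum>j. I j \<omega> * of_nat (xi n j \<omega>)) \<partial>M)"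
    by (simp only: GW.simps I_def of_nat_sum_lessThan_eq_suminf)
  also have "\<dots> = (\<Sum>j. \<integral>\<^sup>+\<omega>. I j \<omega> * of_nat (xi n j \<omega>) \<partial>M)"
    by (rule nn_integral_suminf) measurable
  also have "\<dots> = (\<Sum>j. (\<integral>\<^sup>+\<omega>. I j \<omega> \<partial>M) * m)"
  proof (rule suminf_cong)
    fix j
    show "(\<integral>\<^sup>+\<omega>. I j \<omega> * of_nat (xi n j \<omega>) \<partial>M) = (\<integral>\<^sup>+\<omega>. I j \<omega> \<partial>M) * m"
      using indep_var_nn_integral[OF indep_var_GW_offspring[OF indep, of n j],
          of "\<lambda>g. if j < g then 1 else 0" of_nat] mean
      by (simp add: I_def)
  qed
  also have "(\<Sum>j. (\<integral>\<^sup>+\<omega>. I j \<omega> \<partial>M) * m) = (\<integral>\<^sup>+\<omega>. (\<Sum>j. I j \<omega>) \<partial>M) * m"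
    by (simp add: nn_integral_suminf)
  also have "(\<lambda>\<omega>. \<Sum>j. I j \<omega>) = (\<lambda>\<omega>. of_nat (GW xi n \<omega>))"
  proof
    fix \<omega>
    show "(\<Sum>j. I j \<omega>) = of_nat (GW xi n \<omega>)"
      using of_nat_sum_lessThan_eq_suminf[where g="GW xi n \<omega>" and a="\<lambda>_. 1"] by (simp add: I_def)
  qed
  finally show ?case by (simp add: Suc.IH mult.commute)
qed

lemma (in prob_space) nn_integral_GW_family:
  assumes indep: "indep_vars (\<lambda>_. count_space UNIV)
          (\<lambda>x \<omega>. case x of Inl (i, k, n, j) \<Rightarrow> xi i k n j \<omega> | Inr k \<Rightarrow> J k \<omega>) UNIV"
    and mean: "\<And>i k n j. (\<integral>\<^sup>+\<omega>. of_nat (xi i k n j \<omega>) \<partial>M) = m"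
  shows "(\<integral>\<^sup>+\<omega>. of_nat (GW (xi i k) n \<omega>) \<partial>M) = m ^ n"
proof (rule nn_integral_GW[OF _ mean])
  have "indep_vars (\<lambda>_. count_space UNIV)
      (\<lambda>p \<omega>. case (case p of (n, j) \<Rightarrow> Inl (i, k, n, j)) of Inl (i, k, n, j) \<Rightarrow> xi i k n j \<omega> | Inr k \<Rightarrow> J k \<omega>) UNIV"
    by (rule indep_vars_reindex[OF indep]) (auto simp: inj_on_def)
  then show "indep_vars (\<lambda>_. count_space UNIV) (\<lambda>(n, j). xi i k n j) UNIV"
    by (rule indep_vars_cong[THEN iffD1, rotated -1]) (auto split: prod.split)
qed

lemma (in finite_measure) measure_gt_le_nn_integral:
  fixes u :: "'a \<Rightarrow> real"
  assumes [measurable]: "u \<in> borel_measurable M" and a: "a > 0" and b: "b \<ge> 0"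
    and I: "(\<integral>\<^sup>+x. ennreal (u x) \<partial>M) \<le> ennreal b"
  shows "measure M {x\<in>space M. a < u x} \<le> b / a"
proof -
  have "{x\<in>space M. a < u x} \<subseteq> {x\<in>space M. 1 \<le> ennreal (1 / a) * ennreal (u x)}"
    using a by (auto simp: ennreal_mult[symmetric] ennreal_1[symmetric] simp del: ennreal_1)
  then have "emeasure M {x\<in>space M. a < u x}
      \<le> emeasure M {x\<in>space M. 1 \<le> ennreal (1 / a) * ennreal (u x)}"
    by (rule emeasure_mono) measurable
  also have "\<dots> \<le> ennreal (1 / a) * (\<integral>\<^sup>+x. ennreal (u x) * indicator (space M) x \<partial>M)"
    by (rule nn_integral_Markov_inequality) auto
  also have "(\<integral>\<^sup>+x. ennreal (u x) * indicator (space M) x \<partial>M) = (\<integral>\<^sup>+x. ennreal (u x) \<partial>M)"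
    by (rule nn_integral_cong) auto
  also have "ennreal (1 / a) * (\<integral>\<^sup>+x. ennreal (u x) \<partial>M) \<le> ennreal (b / a)"
    using mult_left_mono[OF I, of "ennreal (1 / a)"] a b by (simp add: ennreal_mult[symmetric])
  finally show ?thesis
    using a b by (simp add: emeasure_eq_measure)
qed

lemma logp_measurable [measurable]: "logp \<in> borel_measurable borel"
  unfolding logp_def by measurable

lemma (in finite_measure) measure_logp_gt_le:
  fixes u :: "'a \<Rightarrow> real"
  assumes [measurable]: "u \<in> borel_measurable M"
    and I: "(\<integral>\<^sup>+x. ennreal (u x) \<partial>M) \<le> ennreal b" and b: "b \<ge> 0"
    and c: "c > 0" and s: "s \<ge> 0"
  shows "measure M {x\<in>space M. s < logp (u x) / c} \<le> b * exp (- s * c)"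
proof -
  have "{x\<in>space M. s < logp (u x) / c} \<subseteq> {x\<in>space M. exp (s * c) < u x}"
  proof safe
    fix x assume "s < logp (u x) / c"
    then have "s * c < logp (u x)"
      using c by (simp add: pos_less_divide_eq)
    moreover have "0 \<le> s * c"
      using s c by simp
    ultimately have "1 < u x" "exp (s * c) < exp (ln (u x))"
      unfolding logp_def by (auto split: if_splits)
    then show "exp (s * c) < u x" by simp
  qed
  then have "measure M {x\<in>space M. s < logp (u x) / c} \<le> measure M {x\<in>space M. exp (s * c) < u x}"
    by (rule finite_measure_mono) measurable
  also have "\<dots> \<le> b / exp (s * c)"
    by (rule measure_gt_le_nn_integral[OF _ _ b I]) simp_all
  finally show ?thesis
    by (simp add: exp_minus divide_inverse)
qed

lemma Ytrunc_le:
  "Ytrunc xi J \<gamma> cn N \<omega>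
     \<le> (\<Sum>k\<in>{0..N}. \<Sum>i\<in>{1..nat \<lfloor>exp (\<gamma> * cn)\<rfloor>}. real (GW (xi i k) (N - k) \<omega>))"
  unfolding Ytrunc_def
proof (rule sum_mono)
  fix k
  have "real (\<Sum>i\<in>{1..J k \<omega>}. GW (xi i k) (N - k) \<omega>)
      \<le> (\<Sum>i\<in>{1..nat \<lfloor>exp (\<gamma> * cn)\<rfloor>}. real (GW (xi i k) (N - k) \<omega>))"
    if "real (J k \<omega>) \<le> exp (\<gamma> * cn)"
    using le_nat_floor[OF that] by (simp add: sum_mono2)
  then show "(if real (J k \<omega>) \<le> exp (\<gamma> * cn) then real (\<Sum>i\<in>{1..J k \<omega>}. GW (xi i k) (N - k) \<omega>) else 0)
      \<le> (\<Sum>i\<in>{1..nat \<lfloor>exp (\<gamma> * cn)\<rfloor>}. real (GW (xi i k) (N - k) \<omega>))"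
    by (simp add: sum_nonneg)
qed

lemma measurable_Ytrunc:
  assumes [measurable]: "\<And>i k n j. xi i k n j \<in> measurable M (count_space UNIV)"
    and [measurable]: "\<And>k. J k \<in> measurable M (count_space UNIV)"
  shows "Ytrunc xi J \<gamma> cn N \<in> borel_measurable M"
proof -
  have [measurable]: "GW (xi i k) n \<in> measurable M (count_space UNIV)" for i k n
    by (rule measurable_GW) simp
  have [measurable]: "(\<lambda>\<omega>. \<Sum>i\<in>{1..J k \<omega>}. GW (xi i k) n \<omega>) \<in> measurable M (count_space UNIV)" for k n
    by (rule measurable_compose_countable[where f="\<lambda>g \<omega>. \<Sum>i\<in>{1..g}. GW (xi i k) n \<omega>" and g="J k"])
      measurable
  show ?thesis
    unfolding Ytrunc_def by measurable
qed

lemma nn_integral_Ytrunc_le: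
  assumes xi_meas: "\<And>i k n j. xi i k n j \<in> measurable M (count_space UNIV)"
    and GW_mean: "\<And>i k n. (\<integral>\<^sup>+\<omega>. of_nat (GW (xi i k) n \<omega>) \<partial>M) = ennreal (\<mu> ^ n)"
    and w: "w \<ge> 0" "\<And>k. k \<le> N \<Longrightarrow> w * \<mu> ^ (N - k) \<le> R"
  shows "(\<integral>\<^sup>+\<omega>. ennreal (w * Ytrunc xi J \<gamma> cn N \<omega>) \<partial>M)
           \<le> ennreal ((real N + 1) * exp (\<gamma> * cn) * R)"
proof -
  define L where "L = nat \<lfloor>exp (\<gamma> * cn)\<rfloor>"
  have [measurable]: "GW (xi i k) n \<in> measurable M (count_space UNIV)" for i k n
    by (rule measurable_GW) (rule xi_meas)
  have R: "R \<ge> 0"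
    using w(1) w(2)[of N] by simp
  have "(\<integral>\<^sup>+\<omega>. ennreal (w * Ytrunc xi J \<gamma> cn N \<omega>) \<partial>M)
      \<le> (\<integral>\<^sup>+\<omega>. (\<Sum>k\<in>{0..N}. \<Sum>i\<in>{1..L}. ennreal w * of_nat (GW (xi i k) (N - k) \<omega>)) \<partial>M)"
  proof (rule nn_integral_mono)
    fix \<omega>
    have "w * Ytrunc xi J \<gamma> cn N \<omega> \<le> (\<Sum>k\<in>{0..N}. \<Sum>i\<in>{1..L}. w * real (GW (xi i k) (N - k) \<omega>))"
      using mult_left_mono[OF Ytrunc_le w(1)] by (simp add: L_def sum_distrib_left)
    then have "ennreal (w * Ytrunc xi J \<gamma> cn N \<omega>)
        \<le> ennreal (\<Sum>k\<in>{0..N}. \<Sum>i\<in>{1..L}. w * real (GW (xi i k) (N - k) \<omega>))"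
      by (rule ennreal_leI)
    then show "ennreal (w * Ytrunc xi J \<gamma> cn N \<omega>)
        \<le> (\<Sum>k\<in>{0..N}. \<Sum>i\<in>{1..L}. ennreal w * of_nat (GW (xi i k) (N - k) \<omega>))"
      using w(1) by (simp add: sum_nonneg ennreal_mult[symmetric] ennreal_of_nat_eq_real_of_nat)
  qed
  also have "\<dots> = (\<Sum>k\<in>{0..N}. \<Sum>i\<in>{1..L}. ennreal w * ennreal (\<mu> ^ (N - k)))"
    by (simp add: nn_integral_sum nn_integral_cmult GW_mean)
  also have "\<dots> \<le> (\<Sum>k\<in>{0..N}. \<Sum>i\<in>{1..L}. ennreal R)"
    using w by (intro sum_mono) (simp add: ennreal_mult'[symmetric] ennreal_leI)
  also have "\<dots> = ennreal (real (Suc N)) * (ennreal (real L) * ennreal R)"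
    by (simp del: of_nat_Suc add: ennreal_of_nat_eq_real_of_nat[symmetric])
  also have "\<dots> = ennreal ((real N + 1) * real L * R)"
    using R by (simp add: ennreal_mult[symmetric] mult.assoc del: of_nat_Suc)
  also have "\<dots> \<le> ennreal ((real N + 1) * exp (\<gamma> * cn) * R)"
    using R by (intro ennreal_leI mult_right_mono mult_left_mono) (simp_all add: L_def of_nat_nat)
  finally show ?thesis .
qed

lemma mfun_nonneg: "\<mu> > 0 \<Longrightarrow> mfun \<mu> c N \<ge> 0"
  by (simp add: mfun_def)

lemma min_inverse_power_mult_power_le_1:
  fixes \<mu> :: real
  assumes "\<mu> > 0" "k \<le> N"
  shows "min (inverse \<mu> ^ N) 1 * \<mu> ^ (N - k) \<le> 1"
proof (cases "\<mu> \<ge> 1")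
  case True
  have "min (inverse \<mu> ^ N) 1 * \<mu> ^ (N - k) \<le> inverse \<mu> ^ N * \<mu> ^ (N - k)"
    using assms by (intro mult_right_mono) auto
  also have "\<dots> = inverse \<mu> ^ k"
    using assms by (simp add: power_diff power_inverse field_simps)
  also have "\<dots> \<le> 1"
    using True by (intro power_le_one) (auto simp: inverse_le_1_iff)
  finally show ?thesis .
next
  case False
  then show ?thesis
    using assms by (intro mult_le_one) (auto simp: power_le_one)
qed

definition growth_rate :: "real \<Rightarrow> (nat \<Rightarrow> real) \<Rightarrow> real" where
  "growth_rate \<mu> c = (if \<forall>n\<ge>1. c n = real n then 1 else max 1 \<mu>)"

lemma growth_rate_ge_1: "growth_rate \<mu> c \<ge> 1"
  by (simp add: growth_rate_def)

lemma mfun_mult_power_le: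
  assumes "\<mu> > 0" "k \<le> N"
  shows "mfun \<mu> c N * \<mu> ^ (N - k) \<le> growth_rate \<mu> c ^ N"
proof (cases "\<forall>n\<ge>1. c n = real n")
  case True
  then show ?thesis
    unfolding mfun_def growth_rate_def if_P[OF True]
    using min_inverse_power_mult_power_le_1[OF assms] by simp
next
  case False
  have "\<mu> ^ (N - k) \<le> max 1 \<mu> ^ (N - k)"
    using assms by (intro power_mono) auto
  also have "\<dots> \<le> max 1 \<mu> ^ N"
    by (intro power_increasing) auto
  finally show ?thesis
    unfolding mfun_def growth_rate_def if_not_P[OF False] by simp
qed

lemma (in prob_space) measure_rescaled_Ytrunc_gt_le:
  assumes xi_meas: "\<And>i k n j. xi i k n j \<in> measurable M (count_space UNIV)"
    and J_meas: "\<And>k. J k \<in> measurable M (count_space UNIV)"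
    and GW_mean: "\<And>i k n. (\<integral>\<^sup>+\<omega>. of_nat (GW (xi i k) n \<omega>) \<partial>M) = ennreal (\<mu> ^ n)"
    and \<mu>: "\<mu> > 0" and cn: "cn > 0" and \<gamma>: "\<gamma> \<ge> 0" and \<delta>: "\<delta> \<ge> 0"
  shows "measure M {\<omega>\<in>space M. \<gamma> + \<delta> < logp (mfun \<mu> c N * Ytrunc xi J \<gamma> cn N \<omega>) / cn}
           \<le> (real N + 1) * growth_rate \<mu> c ^ N * exp (- \<delta> * cn)"
proof -
  have [measurable]: "Ytrunc xi J \<gamma> cn N \<in> borel_measurable M"
    by (rule measurable_Ytrunc[OF xi_meas J_meas])
  have "(\<integral>\<^sup>+\<omega>. ennreal (mfun \<mu> c N * Ytrunc xi J \<gamma> cn N \<omega>) \<partial>M)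
      \<le> ennreal ((real N + 1) * exp (\<gamma> * cn) * growth_rate \<mu> c ^ N)"
    by (rule nn_integral_Ytrunc_le[OF xi_meas GW_mean])
      (use \<mu> in \<open>simp_all add: mfun_nonneg mfun_mult_power_le\<close>)
  then have "measure M {\<omega>\<in>space M. \<gamma> + \<delta> < logp (mfun \<mu> c N * Ytrunc xi J \<gamma> cn N \<omega>) / cn}
      \<le> (real N + 1) * exp (\<gamma> * cn) * growth_rate \<mu> c ^ N * exp (- (\<gamma> + \<delta>) * cn)"
    by (rule measure_logp_gt_le[rotated])
      (use cn \<gamma> \<delta> growth_rate_ge_1[of \<mu> c] in \<open>simp_all, measurable\<close>)
  also have "\<dots> = (real N + 1) * growth_rate \<mu> c ^ N * (exp (\<gamma> * cn) * exp (- (\<gamma> + \<delta>) * cn))"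
    by (simp only: mult_ac)
  also have "exp (\<gamma> * cn) * exp (- (\<gamma> + \<delta>) * cn) = exp (- \<delta> * cn)"
    by (simp only: exp_add[symmetric]) (simp add: algebra_simps)
  finally show ?thesis .
qed

lemma floor_image_subset_atMost:
  fixes a T :: real
  assumes "a \<ge> 0"
  shows "(\<lambda>t. nat \<lfloor>a * t\<rfloor>) ` {0..T} \<subseteq> {..nat \<lfloor>a * T\<rfloor>}"
  using assms by (auto intro!: nat_mono floor_mono mult_left_mono)

lemma sets_Ex_floor:
  fixes a T :: real
  assumes "\<And>N. B N \<in> sets M" and "a \<ge> 0"
  shows "{\<omega>\<in>space M. \<exists>t\<in>{0..T}. \<omega> \<in> B (nat \<lfloor>a * t\<rfloor>)} \<in> sets M"
proof -
  have eq: "{\<omega>\<in>space M. \<exists>t\<in>{0..T}. \<omega> \<in> B (nat \<lfloor>a * t\<rfloor>)} = (\<Union>N\<in>(\<lambda>t. nat \<lfloor>a * t\<rfloor>) ` {0..T}. B N)"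
    using sets.sets_into_space[OF assms(1)] by blast
  show ?thesis
    unfolding eq
    by (intro sets.finite_UN assms(1) finite_subset[OF floor_image_subset_atMost[OF assms(2)]]) auto
qed

lemma (in finite_measure) measure_Ex_floor_le:
  fixes a T :: real
  assumes B: "\<And>N. B N \<in> sets M" and "a \<ge> 0"
  shows "measure M {\<omega>\<in>space M. \<exists>t\<in>{0..T}. \<omega> \<in> B (nat \<lfloor>a * t\<rfloor>)}
           \<le> (\<Sum>N\<le>nat \<lfloor>a * T\<rfloor>. measure M (B N))"
proof -
  have eq: "{\<omega>\<in>space M. \<exists>t\<in>{0..T}. \<omega> \<in> B (nat \<lfloor>a * t\<rfloor>)} = (\<Union>N\<in>(\<lambda>t. nat \<lfloor>a * t\<rfloor>) ` {0..T}. B N)"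
    using sets.sets_into_space[OF B] by blast
  have "measure M (\<Union>N\<in>(\<lambda>t. nat \<lfloor>a * t\<rfloor>) ` {0..T}. B N) \<le> measure M (\<Union>N\<le>nat \<lfloor>a * T\<rfloor>. B N)"
    using floor_image_subset_atMost[OF \<open>a \<ge> 0\<close>] B by (intro finite_measure_mono) auto
  also have "\<dots> \<le> (\<Sum>N\<le>nat \<lfloor>a * T\<rfloor>. measure M (B N))"
    using B by (intro finite_measure_subadditive_finite) auto
  finally show ?thesis
    unfolding eq .
qed

lemma sum_atMost_floor_mult_power_le:
  fixes \<rho> x :: real
  assumes \<rho>: "\<rho> \<ge> 1" and x: "x \<ge> 0"
  shows "(\<Sum>N\<le>nat \<lfloor>x\<rfloor>. (real N + 1) * \<rho> ^ N) \<le> (x + 1)\<^sup>2 * \<rho> powr x"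
proof -
  have K: "real (nat \<lfloor>x\<rfloor>) \<le> x"
    using x by (simp add: of_nat_nat)
  have "(\<Sum>N\<le>nat \<lfloor>x\<rfloor>. (real N + 1) * \<rho> ^ N) \<le> (\<Sum>N\<le>nat \<lfloor>x\<rfloor>. (x + 1) * \<rho> powr x)"
  proof (rule sum_mono)
    fix N assume "N \<in> {..nat \<lfloor>x\<rfloor>}"
    then have N: "real N \<le> x"
      using K by simp
    have "\<rho> ^ N = \<rho> powr real N"
      using \<rho> by (simp add: powr_realpow)
    also have "\<dots> \<le> \<rho> powr x"
      using \<rho> N by (intro powr_mono) auto
    finally show "(real N + 1) * \<rho> ^ N \<le> (x + 1) * \<rho> powr x"
      using N \<rho> by (intro mult_mono) auto
  qed
  also have "\<dots> = (real (nat \<lfloor>x\<rfloor>) + 1) * ((x + 1) * \<rho> powr x)"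
    by simp
  also have "\<dots> \<le> (x + 1)\<^sup>2 * \<rho> powr x"
    using K x by (simp add: power2_eq_square mult_right_mono)
  finally show ?thesis .
qed

lemma summable_poly_mult_exp:
  fixes T d :: real
  assumes "d > 0" "T > 0"
  shows "summable (\<lambda>n. (real n * T + 1)\<^sup>2 * exp (- d * real n))"
proof (rule summable_comparison_test_ev)
  have "(\<lambda>n. (real n * T + 1)\<^sup>2 * exp (- d * real n) * real n ^ 2) \<longlonglongrightarrow> 0"
    using assms by real_asymp
  then have "eventually (\<lambda>n. (real n * T + 1)\<^sup>2 * exp (- d * real n) * real n ^ 2 < 1) sequentially"
    by (rule order_tendstoD) simp
  then show "eventually (\<lambda>n. norm ((real n * T + 1)\<^sup>2 * exp (- d * real n)) \<le> 1 / real n ^ 2) sequentially"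
    using eventually_ge_at_top[of "1::nat"] by eventually_elim (simp add: field_simps)
  show "summable (\<lambda>n. 1 / real n ^ 2)"
    using inverse_power_summable[of 2, where 'a=real] by (simp add: divide_inverse)
qed

lemma summable_union_bound:
  fixes \<rho> T \<delta> :: real and c :: "nat \<Rightarrow> real"
  assumes \<rho>: "\<rho> \<ge> 1" and T: "T > 0" and \<delta>: "\<delta> > 0"
    and c: "(\<forall>n\<ge>1. c n = real n) \<and> \<rho> = 1 \<or> filterlim (\<lambda>n. c n / real n) at_top sequentially"
  shows "summable (\<lambda>n. (real n * T + 1)\<^sup>2 * \<rho> powr (real n * T) * exp (- \<delta> * c n))"
  using c
proof
  assume c: "(\<forall>n\<ge>1. c n = real n) \<and> \<rho> = 1"
  have ev: "eventually (\<lambda>n. (real n * T + 1)\<^sup>2 * \<rho> powr (real n * T) * exp (- \<delta> * c n)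
      = (real n * T + 1)\<^sup>2 * exp (- \<delta> * real n)) sequentially"
    using eventually_ge_at_top[of 1] by eventually_elim (use c in simp)
  show ?thesis
    by (rule summable_cong[OF ev, THEN iffD2]) (rule summable_poly_mult_exp[OF \<delta> T])
next
  assume "filterlim (\<lambda>n. c n / real n) at_top sequentially"
  \<comment> \<open>the threshold makes \<open>n T ln \<rho> - \<delta> c n \<le> -n\<close>\<close>
  then have "eventually (\<lambda>n. (T * ln \<rho> + 1) / \<delta> \<le> c n / real n) sequentially"
    by (simp add: filterlim_at_top)
  then have "eventually (\<lambda>n. norm ((real n * T + 1)\<^sup>2 * \<rho> powr (real n * T) * exp (- \<delta> * c n))
      \<le> (real n * T + 1)\<^sup>2 * exp (- 1 * real n)) sequentially"
    using eventually_ge_at_top[of 1]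
  proof eventually_elim
    case (elim n)
    then have "T * ln \<rho> * real n + real n \<le> \<delta> * c n"
      using \<delta> by (simp add: field_simps)
    then have "\<rho> powr (real n * T) * exp (- \<delta> * c n) \<le> exp (- 1 * real n)"
      using \<rho> by (simp add: powr_def exp_add[symmetric] mult_ac)
    then show ?case
      by (simp add: mult.assoc mult_left_mono)
  qed
  then show ?thesis
    by (rule summable_comparison_test_ev) (rule summable_poly_mult_exp[OF _ T], simp)
qed

lemma sets_Ex_rescaled_Ytrunc_gt:
  fixes a T :: real
  assumes "\<And>i k n j. xi i k n j \<in> measurable M (count_space UNIV)"
    and "\<And>k. J k \<in> measurable M (count_space UNIV)" and "a \<ge> 0"
  shows "{\<omega>\<in>space M. \<exists>t\<in>{0..T}.
           logp (mfun \<mu> c (nat \<lfloor>a * t\<rfloor>) * Ytrunc xi J \<gamma> cn (nat \<lfloor>a * t\<rfloor>) \<omega>) / cn > s} \<in> sets M"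
proof -
  have [measurable]: "Ytrunc xi J \<gamma> cn N \<in> borel_measurable M" for N
    using assms(1,2) by (rule measurable_Ytrunc)
  have "{\<omega>\<in>space M. s < logp (mfun \<mu> c N * Ytrunc xi J \<gamma> cn N \<omega>) / cn} \<in> sets M" for N
    by measurable
  from sets_Ex_floor[OF this \<open>a \<ge> 0\<close>, of T] show ?thesis
    by simp
qed

lemma (in prob_space) measure_Ex_rescaled_Ytrunc_gt_le:
  fixes a T :: real
  assumes xi_meas: "\<And>i k n j. xi i k n j \<in> measurable M (count_space UNIV)"
    and J_meas: "\<And>k. J k \<in> measurable M (count_space UNIV)"
    and GW_mean: "\<And>i k n. (\<integral>\<^sup>+\<omega>. of_nat (GW (xi i k) n \<omega>) \<partial>M) = ennreal (\<mu> ^ n)"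
    and \<mu>: "\<mu> > 0" and cn: "cn > 0" and \<gamma>: "\<gamma> \<ge> 0" and \<delta>: "\<delta> \<ge> 0" and a: "a \<ge> 0" and T: "T \<ge> 0"
  shows "measure M {\<omega>\<in>space M. \<exists>t\<in>{0..T}.
           logp (mfun \<mu> c (nat \<lfloor>a * t\<rfloor>) * Ytrunc xi J \<gamma> cn (nat \<lfloor>a * t\<rfloor>) \<omega>) / cn > \<gamma> + \<delta>}
           \<le> (a * T + 1)\<^sup>2 * growth_rate \<mu> c powr (a * T) * exp (- \<delta> * cn)"
proof -
  define B where "B N = {\<omega>\<in>space M. \<gamma> + \<delta> < logp (mfun \<mu> c N * Ytrunc xi J \<gamma> cn N \<omega>) / cn}" for N
  have [measurable]: "Ytrunc xi J \<gamma> cn N \<in> borel_measurable M" for N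
    using xi_meas J_meas by (rule measurable_Ytrunc)
  have "B N \<in> sets M" for N
    unfolding B_def by measurable
  then have "measure M {\<omega>\<in>space M. \<exists>t\<in>{0..T}. \<omega> \<in> B (nat \<lfloor>a * t\<rfloor>)}
      \<le> (\<Sum>N\<le>nat \<lfloor>a * T\<rfloor>. measure M (B N))"
    using a by (rule measure_Ex_floor_le)
  also have "\<dots> \<le> (\<Sum>N\<le>nat \<lfloor>a * T\<rfloor>. (real N + 1) * growth_rate \<mu> c ^ N) * exp (- \<delta> * cn)"
    unfolding B_def sum_distrib_right using cn \<gamma> \<delta>
    by (intro sum_mono measure_rescaled_Ytrunc_gt_le[OF xi_meas J_meas GW_mean \<mu>])
  also have "\<dots> \<le> (a * T + 1)\<^sup>2 * growth_rate \<mu> c powr (a * T) * exp (- \<delta> * cn)"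
    using growth_rate_ge_1 a T by (intro mult_right_mono sum_atMost_floor_mult_power_le) auto
  finally show ?thesis
    by (simp add: B_def)
qed

theorem lemma2:
  fixes M :: "'a measure"
    and xi :: "nat \<Rightarrow> nat \<Rightarrow> nat \<Rightarrow> nat \<Rightarrow> 'a \<Rightarrow> nat"
    and J :: "nat \<Rightarrow> 'a \<Rightarrow> nat"
    and \<mu> :: real and c :: "nat \<Rightarrow> real" and T \<gamma> \<delta> :: real
  assumes "prob_space M"
    and indep: "prob_space.indep_vars M (\<lambda>_. count_space UNIV)
          (\<lambda>x \<omega>. case x of Inl (i, k, n, j) \<Rightarrow> xi i k n j \<omega> | Inr k \<Rightarrow> J k \<omega>)
          (UNIV :: ((nat \<times> nat \<times> nat \<times> nat) + nat) set)"
    and xi_ident: "\<And>i k n j. distr M (count_space UNIV) (xi i k n j)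
                              = distr M (count_space UNIV) (xi 1 0 0 0)"
    and J_ident: "\<And>k. distr M (count_space UNIV) (J k) = distr M (count_space UNIV) (J 0)"
    and mean_int: "integrable M (\<lambda>\<omega>. real (xi 1 0 0 0 \<omega>))"
    and mean: "prob_space.expectation M (\<lambda>\<omega>. real (xi 1 0 0 0 \<omega>)) = \<mu>"
    and mu_pos: "\<mu> > 0"
    and c_pos: "\<And>n. n \<ge> 1 \<Longrightarrow> c n > 0"
    and c_cases: "(\<forall>n\<ge>1. c n = real n) \<or> filterlim (\<lambda>n. c n / real n) at_top sequentially"
    and T_pos: "T > 0" and gamma_pos: "\<gamma> > 0" and delta_pos: "\<delta> > 0"
  defines "A \<equiv> \<lambda>n. {\<omega> \<in> space M. \<exists>t\<in>{0..T}.
              logp (mfun \<mu> c (nat \<lfloor>real n * t\<rfloor>)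
                    * Ytrunc xi J \<gamma> (c n) (nat \<lfloor>real n * t\<rfloor>) \<omega>) / c n > \<gamma> + \<delta>}"
  shows "(\<forall>n. A n \<in> sets M) \<and> summable (\<lambda>n. measure M (A (Suc n)))"
proof -
  interpret prob_space M by fact
  have rv: "random_variable (count_space UNIV) (\<lambda>\<omega>. case x of Inl (i, k, n, j) \<Rightarrow> xi i k n j \<omega> | Inr k \<Rightarrow> J k \<omega>)" for x
    using indep by (simp add: indep_vars_def)
  have xi_meas: "xi i k n j \<in> measurable M (count_space UNIV)" for i k n j
    using rv[of "Inl (i, k, n, j)"] by simp
  have J_meas: "J k \<in> measurable M (count_space UNIV)" for k
    using rv[of "Inr k"] by simp
  have xi_mean: "(\<integral>\<^sup>+\<omega>. of_nat (xi i k n j \<omega>) \<partial>M) = ennreal \<mu>" for i k n j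
    using nn_integral_comp_eq_if_distr_eq[OF xi_ident xi_meas xi_meas, of of_nat]
      nn_integral_eq_integral[OF mean_int] mean by (simp add: ennreal_of_nat_eq_real_of_nat)
  have GW_mean: "(\<integral>\<^sup>+\<omega>. of_nat (GW (xi i k) n \<omega>) \<partial>M) = ennreal (\<mu> ^ n)" for i k n
    using nn_integral_GW_family[OF indep xi_mean] mu_pos by (simp add: ennreal_power)
  let ?bound = "\<lambda>n. (real n * T + 1)\<^sup>2 * growth_rate \<mu> c powr (real n * T) * exp (- \<delta> * c n)"
  have A_sets: "A n \<in> sets M" for n
    unfolding A_def by (rule sets_Ex_rescaled_Ytrunc_gt[OF xi_meas J_meas]) simp
  have A_le: "measure M (A n) \<le> ?bound n" if "n \<ge> 1" for n
    unfolding A_def using c_pos[OF that] gamma_pos delta_pos T_pos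
    by (intro measure_Ex_rescaled_Ytrunc_gt_le[OF xi_meas J_meas GW_mean mu_pos]) auto
  have "summable ?bound"
    using c_cases growth_rate_ge_1 T_pos delta_pos
    by (intro summable_union_bound) (auto simp: growth_rate_def)
  then have "summable (\<lambda>n. ?bound (Suc n))"
    by (subst summable_Suc_iff)
  then have "summable (\<lambda>n. measure M (A (Suc n)))"
  proof (rule summable_comparison_test'[where N = 0])
    fix n :: nat
    show "norm (measure M (A (Suc n))) \<le> ?bound (Suc n)"
      using A_le[of "Suc n"] by simp
  qed
  with A_sets show ?thesis
    by blast
qed

end
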